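(* For $n\ge 1$, let $G_n$ denote the collection of all spiro chains with $n$ hexagons, one for each sequence of attachment choices (ortho/meta/para) at steps $3,\dots,n$ (so $|G_n|=3^{\max(n-2,0)}$, counted with multiplicity). Then \[ \mathrm{STN}_{avr}(G_n):=\frac{1}{|G_n|}\sum_{G\in G_n}\mathrm{STN}(G)=\frac{900}{361}\Big(\frac{41}{3}\Big)^n+\frac{130}{38}n-\frac{539}{361}. \]
   Context: For a graph $G$, $\mathrm{STN}(G)$ is the number of nonempty subtrees of $G$ (subgraphs that are trees, single vertices included). A spiro chain with $n$ hexagons consists of hexagons (6-cycles) $H_1,\dots,H_n$ such that $H_i$ and $H_{i+1}$ share exactly one vertex (a cut vertex), non-consecutive hexagons are vertex-disjoint, and the graph is the union of the hexagons. It is built by stepwise addition of terminal hexagons: for $n\le 2$ it is unique, and at each step $i=3,\dots,n$ the new hexagon $H_i$ is attached at a vertex of $H_{i-1}$ at distance $1$ (ortho), $2$ (meta) or $3$ (para) from the cut vertex shared by $H_{i-1}$ and $H_{i-2}$. *)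

theory Defs
  imports Complex_Main
begin

(* A graph is a pair (V, E) with E a set of 2-element subsets of V. *)
type_synonym 'a graph = "'a set \<times> 'a set set"

definition connected_graph :: "'a graph \<Rightarrow> bool" where
  "connected_graph G \<longleftrightarrow>
     (\<forall>u\<in>fst G. \<forall>v\<in>fst G. (\<lambda>x y. {x, y} \<in> snd G)\<^sup>*\<^sup>* u v)"

definition is_cycle :: "'a graph \<Rightarrow> 'a list \<Rightarrow> bool" where
  "is_cycle G vs \<longleftrightarrow> length vs \<ge> 3 \<and> distinct vs \<and> set vs \<subseteq> fst G \<and>
     (\<forall>i<length vs. {vs ! i, vs ! ((i + 1) mod length vs)} \<in> snd G)"

definition acyclic_graph :: "'a graph \<Rightarrow> bool" where
  "acyclic_graph G \<longleftrightarrow> \<not> (\<exists>vs. is_cycle G vs)"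

definition is_subgraph :: "'a graph \<Rightarrow> 'a graph \<Rightarrow> bool" where
  "is_subgraph H G \<longleftrightarrow> fst H \<subseteq> fst G \<and> snd H \<subseteq> snd G \<and> (\<forall>e\<in>snd H. e \<subseteq> fst H)"

definition is_tree :: "'a graph \<Rightarrow> bool" where
  "is_tree T \<longleftrightarrow> fst T \<noteq> {} \<and> connected_graph T \<and> acyclic_graph T"

definition STN :: "'a graph \<Rightarrow> nat" where
  "STN G = card {T. is_subgraph T G \<and> is_tree T}"

(* Hexagon H_i (1 \<le> i \<le> n) has local positions 0..5 in cyclic order.
   For i \<ge> 2, position 0 of H_i is the cut vertex shared with H_(i-1).
   The choice list cs (length n-2, entries in {1,2,3}) has cs!(i-3) = the distance
   (1 ortho, 2 meta, 3 para) at step i, i.e. H_i is attached to the vertex of H_(i-1)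
   at local position cs!(i-3) (distance from position 0).
   outpos cs j = position of H_j shared with H_(j+1).  For j = 1 the choice is
   immaterial (the chain with \<le> 2 hexagons is unique); we fix position 3. *)
definition outpos :: "nat list \<Rightarrow> nat \<Rightarrow> nat" where
  "outpos cs j = (if j = 1 then 3 else cs ! (j - 2))"

definition spiro_vtx :: "nat list \<Rightarrow> nat \<Rightarrow> nat \<Rightarrow> nat \<times> nat" where
  "spiro_vtx cs i k = (if 2 \<le> i \<and> k = 0 then (i - 1, outpos cs (i - 1)) else (i, k))"

definition spiro_chain :: "nat \<Rightarrow> nat list \<Rightarrow> (nat \<times> nat) graph" where
  "spiro_chain n cs =
     ({spiro_vtx cs i k | i k. 1 \<le> i \<and> i \<le> n \<and> k < 6},
      {{spiro_vtx cs i k, spiro_vtx cs i ((k + 1) mod 6)} | i k. 1 \<le> i \<and> i \<le> n \<and> k < 6})"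

definition spiro_choices :: "nat \<Rightarrow> nat list set" where
  "spiro_choices n = {cs. length cs = n - 2 \<and> set cs \<subseteq> {1, 2, 3}}"

definition STN_avr :: "nat \<Rightarrow> real" where
  "STN_avr n = (\<Sum>cs\<in>spiro_choices n. real (STN (spiro_chain n cs))) / real (card (spiro_choices n))"

end

theory Submission
  imports Defs
begin

(*
  If G is obtained by gluing G1 and G2 at a single vertex v, a subtree of G either avoids v,
  and then lies in G1 or in G2, or it contains v, and then it is the union of a subtree of G1
  through v and a subtree of G2 through v.  Hence
    STN(G) = #avoiding_v(G1) + #avoiding_v(G2) + #through_v(G1) * #through_v(G2).
  The subtrees of a hexagon are its 36 arcs; 21 of them pass through a given vertex, and of
  those avoiding a vertex, c (6 - c) contain the vertex at distance c from it.
  Let N_n be the number of subtrees of the chain G_n through the vertex of H_n at which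
  H_(n+1) is attached.  If H_(n+2) is attached to H_(n+1) at distance c from the cut vertex
  shared with H_n, gluing gives
    STN(G_(n+1)) = STN(G_n) + 20 N_n + 15,    N_(n+1) = c (6 - c) + (21 - c (6 - c)) N_n.
  Summed over c = 1, 2, 3 the coefficients become 22 and 41, so the totals over all
  3^(n-2) chains satisfy linear recurrences whose solution is the stated closed form.
*)

definition subtrees :: "'a graph \<Rightarrow> 'a graph set" where
  "subtrees G = {T. is_subgraph T G \<and> is_tree T}"

definition subtrees_through :: "'a graph \<Rightarrow> 'a \<Rightarrow> 'a graph set" where
  "subtrees_through G v = {T \<in> subtrees G. v \<in> fst T}"

definition subtrees_avoiding :: "'a graph \<Rightarrow> 'a \<Rightarrow> 'a graph set" where
  "subtrees_avoiding G v = {T \<in> subtrees G. v \<notin> fst T}"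

definition graph_union :: "'a graph \<Rightarrow> 'a graph \<Rightarrow> 'a graph" where
  "graph_union A B = (fst A \<union> fst B, snd A \<union> snd B)"

definition graph_inter :: "'a graph \<Rightarrow> 'a graph \<Rightarrow> 'a graph" where
  "graph_inter A B = (fst A \<inter> fst B, snd A \<inter> snd B)"

definition adjacent :: "'a set set \<Rightarrow> 'a \<Rightarrow> 'a \<Rightarrow> bool" where
  "adjacent E x y \<longleftrightarrow> {x, y} \<in> E"

lemma STN_eq_card_subtrees: "STN G = card (subtrees G)"
  unfolding STN_def subtrees_def by (rule refl)

lemma graph_union_commute: "graph_union A B = graph_union B A"
  unfolding graph_union_def by (simp add: Un_commute)

lemma symp_adjacent: "symp (adjacent E)"
  unfolding adjacent_def by (rule sympI) (simp add: insert_commute)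

lemma connected_graph_iff_adjacent:
  "connected_graph G \<longleftrightarrow> (\<forall>u\<in>fst G. \<forall>w\<in>fst G. (adjacent (snd G))\<^sup>*\<^sup>* u w)"
  unfolding connected_graph_def adjacent_def[abs_def] ..

lemma connected_graphI_hub:
  assumes "v \<in> fst G" and "\<And>u. u \<in> fst G \<Longrightarrow> (adjacent (snd G))\<^sup>*\<^sup>* u v"
  shows "connected_graph G"
  unfolding connected_graph_iff_adjacent
  using assms sympD[OF symp_rtranclp[OF symp_adjacent]] by (metis rtranclp_trans)

lemma acyclic_graph_mono:
  assumes "acyclic_graph G" "fst H \<subseteq> fst G" "snd H \<subseteq> snd G"
  shows "acyclic_graph H"
  using assms unfolding acyclic_graph_def is_cycle_def by blast

lemma acyclic_graph_card_le_2:
  assumes "finite (fst G)" "card (fst G) \<le> 2"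
  shows "acyclic_graph G"
  unfolding acyclic_graph_def
proof
  assume "\<exists>vs. is_cycle G vs"
  then obtain vs where "3 \<le> length vs" "distinct vs" "set vs \<subseteq> fst G"
    unfolding is_cycle_def by blast
  then have "card (set vs) \<le> card (fst G)" "card (set vs) = length vs"
    using card_mono[OF assms(1)] distinct_card by auto
  then show False using assms(2) \<open>3 \<le> length vs\<close> by linarith
qed

lemma is_subgraph_trans: "is_subgraph A B \<Longrightarrow> is_subgraph B C \<Longrightarrow> is_subgraph A C"
  unfolding is_subgraph_def by blast

lemma subtrees_mono: "is_subgraph B C \<Longrightarrow> subtrees B \<subseteq> subtrees C"
  unfolding subtrees_def using is_subgraph_trans by blast

lemma finite_subtrees:
  assumes "finite (fst G)" "finite (snd G)"
  shows "finite (subtrees G)"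
proof -
  have "subtrees G \<subseteq> Pow (fst G) \<times> Pow (snd G)"
    unfolding subtrees_def is_subgraph_def by auto
  then show ?thesis using assms finite_subset by blast
qed

lemma finite_subtrees_filter:
  assumes "finite (fst G)" "finite (snd G)"
  shows "finite {T \<in> subtrees G. P T}"
  using finite_subtrees[OF assms] by simp

lemma card_subtrees_split:
  assumes "finite (fst G)" "finite (snd G)"
  shows "card (subtrees G) = card (subtrees_through G v) + card (subtrees_avoiding G v)"
proof -
  have "subtrees G = subtrees_through G v \<union> subtrees_avoiding G v"
    "subtrees_through G v \<inter> subtrees_avoiding G v = {}"
    unfolding subtrees_through_def subtrees_avoiding_def by auto
  with finite_subtrees[OF assms] show ?thesis
    by (metis card_Un_disjoint finite_Un)
qed

lemma filter_image_case_prod: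
  assumes "\<And>a b. a \<in> A \<Longrightarrow> P (f a b) \<longleftrightarrow> Q b"
  shows "{x \<in> case_prod f ` (A \<times> B). P x} = case_prod f ` (A \<times> {b \<in> B. Q b})"
  using assms by fastforce

lemma is_cycle_if_edges:
  assumes "is_cycle G vs" and "\<forall>e\<in>snd T. e \<subseteq> fst T"
    and "\<forall>i<length vs. {vs ! i, vs ! ((i + 1) mod length vs)} \<in> snd T"
  shows "is_cycle T vs"
proof -
  have "set vs \<subseteq> fst T"
  proof
    fix x assume "x \<in> set vs"
    then obtain i where "i < length vs" "x = vs ! i" by (metis in_set_conv_nth)
    then show "x \<in> fst T" using assms(2,3) by blast
  qed
  then show ?thesis using assms unfolding is_cycle_def by blast
qed

lemma cyclic_change_point:
  fixes i j L :: nat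
  assumes "P i" "\<not> P j" "i < L" "j < L"
  shows "\<exists>a<L. P a \<and> \<not> P ((a + 1) mod L)"
proof -
  have "\<exists>a<L. P a \<and> \<not> P ((a + 1) mod L)" if "\<not> P ((i + k) mod L)" for k
    using that
  proof (induction k)
    case 0
    then show ?case using assms(1,3) by simp
  next
    case (Suc k)
    have "((i + k) mod L + 1) mod L = (i + Suc k) mod L" by (simp add: mod_Suc_eq)
    then show ?case using Suc assms(3) by (metis mod_less_divisor zero_less_iff_neq_zero not_less0)
  qed
  moreover have "(i + (j + L - i)) mod L = j" using assms by simp
  ultimately show ?thesis using assms(2) by metis
qed

section \<open>Gluing two graphs at a vertex\<close>

locale one_point_union =
  fixes V1 V2 :: "'a set" and E1 E2 :: "'a set set" and v :: 'a
  assumes edges1_subset: "e \<in> E1 \<Longrightarrow> e \<subseteq> V1"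
    and edges2_subset: "e \<in> E2 \<Longrightarrow> e \<subseteq> V2"
    and vertices_inter: "V1 \<inter> V2 = {v}"
    and edges_doubleton: "e \<in> E1 \<union> E2 \<Longrightarrow> \<exists>x y. x \<noteq> y \<and> e = {x, y}"
begin

lemma swap_sides: "one_point_union V2 V1 E2 E1 v"
  by unfold_locales (use edges1_subset edges2_subset vertices_inter edges_doubleton in auto)

lemma edges_disjoint: "E1 \<inter> E2 = {}"
proof -
  have "e \<subseteq> {v}" if "e \<in> E1" "e \<in> E2" for e
    using that edges1_subset edges2_subset vertices_inter by blast
  then show ?thesis using edges_doubleton by fastforce
qed

lemma is_subgraph_union: "is_subgraph (V1, E1) (V1 \<union> V2, E1 \<union> E2)"
  unfolding is_subgraph_def using edges1_subset by auto

lemma cycle_edges_one_side: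
  assumes T1: "is_subgraph T1 (V1, E1)" and T2: "is_subgraph T2 (V2, E2)"
    and cycle: "is_cycle (graph_union T1 T2) vs"
  defines "edge i \<equiv> {vs ! i, vs ! ((i + 1) mod length vs)}"
  shows "(\<forall>i<length vs. edge i \<in> snd T1) \<or> (\<forall>i<length vs. edge i \<in> snd T2)"
proof (rule ccontr)
  define L where "L = length vs"
  have L: "L > 0" and distinct: "distinct vs"
    and edges: "\<And>i. i < L \<Longrightarrow> edge i \<in> snd T1 \<union> snd T2"
    using cycle unfolding is_cycle_def graph_union_def L_def edge_def by auto
  assume "\<not> ?thesis"
  then obtain i j where i: "i < L" "edge i \<in> snd T1" and j: "j < L" "edge j \<notin> snd T1"
    using edges unfolding L_def by blast
  \<comment> \<open>The cycle switches sides at two different positions, each time at a common vertex,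
      i.e. at v; but it visits v only once.\<close>
  have switch: "vs ! ((c + 1) mod L) = v"
    if "c < L" "(edge c \<in> snd T1) \<noteq> (edge ((c + 1) mod L) \<in> snd T1)" for c
  proof -
    have "edge c \<in> E1 \<and> edge ((c + 1) mod L) \<in> E2 \<or> edge c \<in> E2 \<and> edge ((c + 1) mod L) \<in> E1"
      using that edges[of c] edges[of "(c + 1) mod L"] L T1 T2 unfolding is_subgraph_def by auto
    moreover have "vs ! ((c + 1) mod L) \<in> edge c" "vs ! ((c + 1) mod L) \<in> edge ((c + 1) mod L)"
      unfolding edge_def L_def by auto
    ultimately have "vs ! ((c + 1) mod L) \<in> V1 \<inter> V2"
      using edges1_subset edges2_subset by blast
    then show ?thesis using vertices_inter by blast
  qed
  obtain a where a: "a < L" "edge a \<in> snd T1" "edge ((a + 1) mod L) \<notin> snd T1"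
    using cyclic_change_point[of "\<lambda>i. edge i \<in> snd T1" i j L] i j by blast
  obtain b where b: "b < L" "edge b \<notin> snd T1" "edge ((b + 1) mod L) \<in> snd T1"
    using cyclic_change_point[of "\<lambda>i. edge i \<notin> snd T1" j i L] i j by blast
  have "vs ! ((a + 1) mod L) = vs ! ((b + 1) mod L)"
    using switch[of a] switch[of b] a b by auto
  then have "(a + 1) mod L = (b + 1) mod L"
    using distinct L unfolding L_def by (simp add: nth_eq_iff_index_eq)
  then have "a = b" using a(1) b(1) by (auto simp: mod_Suc split: if_splits)
  then show False using a b by blast
qed

lemma acyclic_graph_union:
  assumes "T1 \<in> subtrees (V1, E1)" "T2 \<in> subtrees (V2, E2)"
  shows "acyclic_graph (graph_union T1 T2)"
  unfolding acyclic_graph_def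
proof
  assume "\<exists>vs. is_cycle (graph_union T1 T2) vs"
  then obtain vs where cycle: "is_cycle (graph_union T1 T2) vs" by blast
  have sub: "is_subgraph T1 (V1, E1)" "is_subgraph T2 (V2, E2)"
    using assms unfolding subtrees_def by auto
  then have "is_cycle T1 vs \<or> is_cycle T2 vs"
    using cycle_edges_one_side[OF sub cycle] is_cycle_if_edges[OF cycle]
    unfolding is_subgraph_def by blast
  then show False using assms unfolding subtrees_def is_tree_def acyclic_graph_def by blast
qed

lemma graph_union_mem_subtrees_through:
  assumes T1: "T1 \<in> subtrees_through (V1, E1) v" and T2: "T2 \<in> subtrees_through (V2, E2) v"
  shows "graph_union T1 T2 \<in> subtrees_through (V1 \<union> V2, E1 \<union> E2) v"
proof -
  have v: "v \<in> fst T1" "v \<in> fst T2" and trees: "is_tree T1" "is_tree T2"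
    using assms unfolding subtrees_through_def subtrees_def by auto
  have sub: "is_subgraph (graph_union T1 T2) (V1 \<union> V2, E1 \<union> E2)"
    using assms unfolding subtrees_through_def subtrees_def is_subgraph_def graph_union_def by auto
  have "(adjacent (snd (graph_union T1 T2)))\<^sup>*\<^sup>* u v" if "u \<in> fst (graph_union T1 T2)" for u
  proof -
    have "adjacent (snd T1) \<le> adjacent (snd (graph_union T1 T2))"
      "adjacent (snd T2) \<le> adjacent (snd (graph_union T1 T2))"
      unfolding adjacent_def graph_union_def by auto
    then show ?thesis
      using that trees v unfolding is_tree_def connected_graph_iff_adjacent graph_union_def
      by (metis UnE fst_conv rtranclp_mono predicate2D)
  qed
  then have "connected_graph (graph_union T1 T2)"
    using v by (intro connected_graphI_hub[of v]) (auto simp: graph_union_def)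
  moreover have "acyclic_graph (graph_union T1 T2)"
    using assms acyclic_graph_union unfolding subtrees_through_def by blast
  ultimately show ?thesis
    using sub v unfolding subtrees_through_def subtrees_def is_tree_def graph_union_def by auto
qed

lemma subtree_avoiding_within_side:
  assumes T: "T \<in> subtrees (V1 \<union> V2, E1 \<union> E2)" and v: "v \<notin> fst T"
    and u: "u \<in> fst T" "u \<in> V1"
  shows "T \<in> subtrees_avoiding (V1, E1) v"
proof -
  have edges_in: "\<And>e. e \<in> snd T \<Longrightarrow> e \<subseteq> fst T" and edges: "snd T \<subseteq> E1 \<union> E2"
    and tree: "is_tree T"
    using T unfolding subtrees_def is_subgraph_def by auto
  \<comment> \<open>Leaving V1 along an edge of T would require passing through v.\<close>
  have step: "y \<in> V1" if "x \<in> V1" "adjacent (snd T) x y" for x y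
  proof (cases "{x, y} \<in> E1")
    case True
    then show ?thesis using edges1_subset by blast
  next
    case False
    have xy: "{x, y} \<in> snd T" using that unfolding adjacent_def by simp
    with False edges have "x \<in> V2" using edges2_subset by blast
    then have "x = v" using vertices_inter that(1) by blast
    then show ?thesis using v xy edges_in by blast
  qed
  have vertices: "fst T \<subseteq> V1"
  proof
    fix w assume "w \<in> fst T"
    then have "(adjacent (snd T))\<^sup>*\<^sup>* u w"
      using tree u unfolding is_tree_def connected_graph_iff_adjacent by blast
    then show "w \<in> V1" by (induction rule: rtranclp_induct) (use u step in auto)
  qed
  have "e \<in> E1" if e: "e \<in> snd T" for e
  proof (rule ccontr)
    assume "e \<notin> E1"
    then have "e \<in> E2" using e edges by blast
    then have "e \<subseteq> {v}" "e \<noteq> {}"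
      using edges2_subset edges_doubleton edges_in[OF e] vertices vertices_inter by blast+
    then show False using edges_in[OF e] v by blast
  qed
  then show ?thesis
    using T v vertices edges_in unfolding subtrees_avoiding_def subtrees_def is_subgraph_def by auto
qed

lemma subtrees_avoiding_cases:
  assumes T: "T \<in> subtrees (V1 \<union> V2, E1 \<union> E2)" and v: "v \<notin> fst T"
  shows "T \<in> subtrees_avoiding (V1, E1) v \<union> subtrees_avoiding (V2, E2) v"
proof -
  interpret swapped: one_point_union V2 V1 E2 E1 v by (rule swap_sides)
  obtain u where u: "u \<in> fst T" using T unfolding subtrees_def is_tree_def by blast
  then have "u \<in> V1 \<or> u \<in> V2" using T unfolding subtrees_def is_subgraph_def by auto
  moreover have "T \<in> subtrees (V2 \<union> V1, E2 \<union> E1)" using T by (simp add: Un_commute)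
  ultimately show ?thesis
    using subtree_avoiding_within_side[OF T v u] swapped.subtree_avoiding_within_side[OF _ v u] by blast
qed

lemma rtranclp_adjacent_within_side:
  assumes T: "is_subgraph T (V1 \<union> V2, E1 \<union> E2)"
    and walk: "(adjacent (snd T))\<^sup>*\<^sup>* x v" and x: "x \<in> V1"
  shows "(adjacent (snd T \<inter> E1))\<^sup>*\<^sup>* x v"
  using walk x
proof (induction rule: converse_rtranclp_induct)
  case (step x y)
  show ?case
  proof (cases "x = v")
    case False
    have xy: "{x, y} \<in> snd T" using step.hyps(1) unfolding adjacent_def by simp
    have "{x, y} \<in> E1"
    proof (rule ccontr)
      assume "{x, y} \<notin> E1"
      moreover have "snd T \<subseteq> E1 \<union> E2" using T unfolding is_subgraph_def by simp
      ultimately have "x \<in> V2" using xy edges2_subset by blast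
      then show False using vertices_inter step.prems False by blast
    qed
    then have "y \<in> V1" "adjacent (snd T \<inter> E1) x y"
      using edges1_subset xy unfolding adjacent_def by auto
    then show ?thesis using step.IH by (meson converse_rtranclp_into_rtranclp)
  qed simp
qed simp

lemma graph_inter_mem_subtrees_through:
  assumes T: "T \<in> subtrees (V1 \<union> V2, E1 \<union> E2)" and v: "v \<in> fst T"
  shows "graph_inter T (V1, E1) \<in> subtrees_through (V1, E1) v"
proof -
  have sub: "is_subgraph T (V1 \<union> V2, E1 \<union> E2)" and tree: "is_tree T"
    using T unfolding subtrees_def by auto
  have v1: "v \<in> V1" using vertices_inter by blast
  have "connected_graph (graph_inter T (V1, E1))"
  proof (rule connected_graphI_hub[of v])
    fix u assume "u \<in> fst (graph_inter T (V1, E1))"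
    then have "u \<in> fst T" "u \<in> V1" unfolding graph_inter_def by auto
    then show "(adjacent (snd (graph_inter T (V1, E1))))\<^sup>*\<^sup>* u v"
      using rtranclp_adjacent_within_side[OF sub] tree v
      unfolding is_tree_def connected_graph_iff_adjacent graph_inter_def by simp
  qed (use v v1 in \<open>simp add: graph_inter_def\<close>)
  moreover have "acyclic_graph (graph_inter T (V1, E1))"
    using tree acyclic_graph_mono unfolding is_tree_def graph_inter_def by fastforce
  moreover have "is_subgraph (graph_inter T (V1, E1)) (V1, E1)"
    using sub edges1_subset unfolding is_subgraph_def graph_inter_def by auto
  ultimately show ?thesis
    using v v1 unfolding subtrees_through_def subtrees_def is_tree_def graph_inter_def by auto
qed

lemma graph_inter_graph_union:
  assumes T1: "T1 \<in> subtrees_through (V1, E1) v" and T2: "T2 \<in> subtrees (V2, E2)"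
  shows "graph_inter (graph_union T1 T2) (V1, E1) = T1"
proof -
  have "fst T2 \<inter> V1 \<subseteq> fst T1" "snd T2 \<inter> E1 = {}"
    using assms edges_disjoint vertices_inter
    unfolding subtrees_through_def subtrees_def is_subgraph_def by auto
  then show ?thesis
    using T1 unfolding subtrees_through_def subtrees_def graph_inter_def graph_union_def is_subgraph_def
    by (cases T1) auto
qed

lemma inj_on_graph_union:
  "inj_on (case_prod graph_union) (subtrees_through (V1, E1) v \<times> subtrees_through (V2, E2) v)"
proof (rule inj_onI)
  interpret swapped: one_point_union V2 V1 E2 E1 v by (rule swap_sides)
  have sub: "X \<in> subtrees G" if "X \<in> subtrees_through G v" for X G
    using that unfolding subtrees_through_def by simp
  fix x y
  assume "x \<in> subtrees_through (V1, E1) v \<times> subtrees_through (V2, E2) v"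
    and "y \<in> subtrees_through (V1, E1) v \<times> subtrees_through (V2, E2) v"
    and eq: "case_prod graph_union x = case_prod graph_union y"
  then obtain A B C D where AB: "x = (A, B)" and CD: "y = (C, D)"
    and A: "A \<in> subtrees_through (V1, E1) v" and B: "B \<in> subtrees_through (V2, E2) v"
    and C: "C \<in> subtrees_through (V1, E1) v" and D: "D \<in> subtrees_through (V2, E2) v"
    by auto
  have "graph_union A B = graph_union C D" using eq AB CD by simp
  then have "A = C" "B = D"
    using graph_inter_graph_union[OF A sub[OF B]] graph_inter_graph_union[OF C sub[OF D]]
      swapped.graph_inter_graph_union[OF B sub[OF A]] swapped.graph_inter_graph_union[OF D sub[OF C]]
    by (simp_all add: graph_union_commute)
  then show "x = y" using AB CD by simp
qed

lemma graph_union_graph_inter: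
  assumes "is_subgraph T (V1 \<union> V2, E1 \<union> E2)"
  shows "graph_union (graph_inter T (V1, E1)) (graph_inter T (V2, E2)) = T"
  using assms unfolding is_subgraph_def graph_union_def graph_inter_def by (cases T) auto

lemma subtrees_one_point_union:
  "subtrees (V1 \<union> V2, E1 \<union> E2) = subtrees_avoiding (V1, E1) v \<union> subtrees_avoiding (V2, E2) v \<union>
     case_prod graph_union ` (subtrees_through (V1, E1) v \<times> subtrees_through (V2, E2) v)"
proof (rule equalityI; rule subsetI)
  interpret swapped: one_point_union V2 V1 E2 E1 v by (rule swap_sides)
  fix T assume T: "T \<in> subtrees (V1 \<union> V2, E1 \<union> E2)"
  show "T \<in> subtrees_avoiding (V1, E1) v \<union> subtrees_avoiding (V2, E2) v \<union>
     case_prod graph_union ` (subtrees_through (V1, E1) v \<times> subtrees_through (V2, E2) v)"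
  proof (cases "v \<in> fst T")
    case True
    have "T \<in> subtrees (V2 \<union> V1, E2 \<union> E1)" using T by (simp add: Un_commute)
    then have "(graph_inter T (V1, E1), graph_inter T (V2, E2))
        \<in> subtrees_through (V1, E1) v \<times> subtrees_through (V2, E2) v"
      using graph_inter_mem_subtrees_through[OF T True]
        swapped.graph_inter_mem_subtrees_through[OF _ True] by blast
    moreover have "T = graph_union (graph_inter T (V1, E1)) (graph_inter T (V2, E2))"
      using graph_union_graph_inter T unfolding subtrees_def by simp
    ultimately show ?thesis by (metis (no_types, lifting) UnI2 case_prod_conv image_eqI)
  qed (use subtrees_avoiding_cases T in blast)
next
  interpret swapped: one_point_union V2 V1 E2 E1 v by (rule swap_sides)
  fix T
  assume "T \<in> subtrees_avoiding (V1, E1) v \<union> subtrees_avoiding (V2, E2) v \<union>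
     case_prod graph_union ` (subtrees_through (V1, E1) v \<times> subtrees_through (V2, E2) v)"
  then show "T \<in> subtrees (V1 \<union> V2, E1 \<union> E2)"
    using subtrees_mono[OF is_subgraph_union] subtrees_mono[OF swapped.is_subgraph_union]
      graph_union_mem_subtrees_through
    unfolding subtrees_avoiding_def subtrees_through_def by (auto simp: Un_commute)
qed

lemma card_subtrees_one_point_union:
  assumes "finite V1" "finite V2" "finite E1" "finite E2"
  shows "card (subtrees (V1 \<union> V2, E1 \<union> E2)) =
    card (subtrees_avoiding (V1, E1) v) + card (subtrees_avoiding (V2, E2) v)
    + card (subtrees_through (V1, E1) v) * card (subtrees_through (V2, E2) v)"
proof -
  have fin: "finite (subtrees_avoiding (V1, E1) v)" "finite (subtrees_avoiding (V2, E2) v)"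
    "finite (subtrees_through (V1, E1) v)" "finite (subtrees_through (V2, E2) v)"
    unfolding subtrees_avoiding_def subtrees_through_def
    using assms by (simp_all add: finite_subtrees_filter)
  have "fst T \<subseteq> V1 \<inter> V2" "fst T \<noteq> {}" "v \<notin> fst T"
    if "T \<in> subtrees_avoiding (V1, E1) v" "T \<in> subtrees_avoiding (V2, E2) v" for T
    using that unfolding subtrees_avoiding_def subtrees_def is_subgraph_def is_tree_def by auto
  then have "subtrees_avoiding (V1, E1) v \<inter> subtrees_avoiding (V2, E2) v = {}"
    using vertices_inter by (metis disjoint_iff subset_singletonD singletonI)
  moreover have "(subtrees_avoiding (V1, E1) v \<union> subtrees_avoiding (V2, E2) v) \<inter>
      case_prod graph_union ` (subtrees_through (V1, E1) v \<times> subtrees_through (V2, E2) v) = {}"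
    unfolding subtrees_avoiding_def subtrees_through_def graph_union_def by auto
  ultimately show ?thesis
    unfolding subtrees_one_point_union
    using fin card_image[OF inj_on_graph_union] card_cartesian_product
    by (simp add: card_Un_disjoint)
qed

lemma card_subtrees_one_point_union_containing:
  assumes "finite V1" "finite V2" "finite E1" "finite E2" and w: "w \<in> V2" "w \<noteq> v"
  shows "card {T \<in> subtrees (V1 \<union> V2, E1 \<union> E2). w \<in> fst T} =
    card {T \<in> subtrees_avoiding (V2, E2) v. w \<in> fst T}
    + card (subtrees_through (V1, E1) v) * card {T \<in> subtrees_through (V2, E2) v. w \<in> fst T}"
proof -
  have fin: "finite {T \<in> subtrees_avoiding (V2, E2) v. w \<in> fst T}"
    "finite (subtrees_through (V1, E1) v)" "finite {T \<in> subtrees_through (V2, E2) v. w \<in> fst T}"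
    unfolding subtrees_avoiding_def subtrees_through_def
    using assms by (simp_all add: finite_subtrees_filter)
  have w1: "w \<notin> V1" using w vertices_inter by blast
  have "{T \<in> subtrees (V1 \<union> V2, E1 \<union> E2). w \<in> fst T} =
      {T \<in> subtrees_avoiding (V1, E1) v. w \<in> fst T} \<union> {T \<in> subtrees_avoiding (V2, E2) v. w \<in> fst T} \<union>
      {T \<in> case_prod graph_union ` (subtrees_through (V1, E1) v \<times> subtrees_through (V2, E2) v). w \<in> fst T}"
    unfolding subtrees_one_point_union by blast
  also have "{T \<in> subtrees_avoiding (V1, E1) v. w \<in> fst T} = {}"
    using w1 unfolding subtrees_avoiding_def subtrees_def is_subgraph_def by auto
  also have "{T \<in> case_prod graph_union ` (subtrees_through (V1, E1) v \<times> subtrees_through (V2, E2) v). w \<in> fst T} =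
      case_prod graph_union ` (subtrees_through (V1, E1) v \<times> {T \<in> subtrees_through (V2, E2) v. w \<in> fst T})"
    by (rule filter_image_case_prod)
      (use w1 in \<open>auto simp: subtrees_through_def subtrees_def is_subgraph_def graph_union_def\<close>)
  finally have split: "{T \<in> subtrees (V1 \<union> V2, E1 \<union> E2). w \<in> fst T} =
      {T \<in> subtrees_avoiding (V2, E2) v. w \<in> fst T} \<union>
      case_prod graph_union ` (subtrees_through (V1, E1) v \<times> {T \<in> subtrees_through (V2, E2) v. w \<in> fst T})"
    by simp
  have "{T \<in> subtrees_avoiding (V2, E2) v. w \<in> fst T} \<inter>
      case_prod graph_union ` (subtrees_through (V1, E1) v \<times> {T \<in> subtrees_through (V2, E2) v. w \<in> fst T}) = {}"
    unfolding subtrees_avoiding_def subtrees_through_def graph_union_def by auto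
  moreover have inj: "inj_on (case_prod graph_union)
      (subtrees_through (V1, E1) v \<times> {T \<in> subtrees_through (V2, E2) v. w \<in> fst T})"
    using inj_on_graph_union by (rule inj_on_subset) auto
  ultimately show ?thesis
    unfolding split using fin card_image[OF inj] card_cartesian_product by (simp add: card_Un_disjoint)
qed

end

section \<open>Paths and hexagons\<close>

definition path_segment :: "(nat \<Rightarrow> 'a) \<Rightarrow> nat \<Rightarrow> nat \<Rightarrow> 'a graph" where
  "path_segment p s e = (p ` {s..e}, (\<lambda>i. {p i, p (Suc i)}) ` {s..<e})"

lemma path_segment_shift:
  assumes "s \<le> e"
  shows "path_segment p s e = path_segment (\<lambda>i. p (s + i)) 0 (e - s)"
proof -
  have A: "{s..e} = (\<lambda>i. s + i) ` {0..e - s}" and B: "{s..<e} = (\<lambda>i. s + i) ` {0..<e - s}"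
    using assms by (auto simp: image_iff intro!: bexI[where x = "_ - s"])
  show ?thesis unfolding path_segment_def A B image_image by simp
qed

lemma path_segment_Suc:
  "path_segment p 0 (Suc m) =
    (fst (path_segment p 0 m) \<union> {p m, p (Suc m)}, snd (path_segment p 0 m) \<union> {{p m, p (Suc m)}})"
proof -
  have "{0..Suc m} = {0..m} \<union> {Suc m}" "{0..<Suc m} = {0..<m} \<union> {m}" by auto
  then show ?thesis unfolding path_segment_def by auto
qed

lemma one_point_union_path_segment:
  assumes "inj_on p {..Suc m}"
  shows "one_point_union (fst (path_segment p 0 m)) {p m, p (Suc m)}
    (snd (path_segment p 0 m)) {{p m, p (Suc m)}} (p m)"
proof
  have "p (Suc m) \<notin> p ` {0..m}"
    using assms by (subst inj_on_image_mem_iff[of p "{..Suc m}"]) auto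
  then show "fst (path_segment p 0 m) \<inter> {p m, p (Suc m)} = {p m}"
    unfolding path_segment_def by auto
next
  fix e assume "e \<in> snd (path_segment p 0 m) \<union> {{p m, p (Suc m)}}"
  then have "e \<in> (\<lambda>i. {p i, p (Suc i)}) ` {0..m}"
    unfolding path_segment_def by auto
  then obtain i where i: "i \<in> {0..m}" "e = {p i, p (Suc i)}" by blast
  then have "p i \<noteq> p (Suc i)"
    using assms by (metis atLeastAtMost_iff atMost_iff inj_on_eq_iff le_SucI n_not_Suc_n Suc_le_mono)
  then show "\<exists>x y. x \<noteq> y \<and> e = {x, y}" using i by blast
qed (auto simp: path_segment_def)

lemma subtrees_single_vertex: "subtrees ({x}, {}) = {({x}, {})}"
proof -
  have "connected_graph ({x}, {})" unfolding connected_graph_def by auto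
  moreover have "acyclic_graph ({x}, {})" by (rule acyclic_graph_card_le_2) auto
  ultimately have "({x}, {}) \<in> subtrees ({x}, {})"
    unfolding subtrees_def is_tree_def is_subgraph_def by auto
  moreover have "T = ({x}, {})" if "T \<in> subtrees ({x}, {})" for T
  proof -
    obtain V E where VE: "T = (V, E)" by (cases T)
    have "V \<subseteq> {x}" "V \<noteq> {}" "E = {}"
      using that VE unfolding subtrees_def is_subgraph_def is_tree_def by auto
    then show ?thesis using VE by (metis subset_singletonD)
  qed
  ultimately show ?thesis by blast
qed

lemma edge_mem_subtrees: "({a, b}, {{a, b}}) \<in> subtrees ({a, b}, {{a, b}})"
proof -
  have "(\<lambda>x y. {x, y} \<in> {{a, b}})\<^sup>*\<^sup>* a b" "(\<lambda>x y. {x, y} \<in> {{a, b}})\<^sup>*\<^sup>* b a"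
    by (auto simp: insert_commute)
  then have "connected_graph ({a, b}, {{a, b}})" unfolding connected_graph_def by auto
  moreover have "acyclic_graph ({a, b}, {{a, b}})"
    by (rule acyclic_graph_card_le_2) (auto simp: card_insert_if)
  ultimately show ?thesis unfolding subtrees_def is_tree_def is_subgraph_def by auto
qed

lemma subtrees_edge:
  assumes "a \<noteq> b"
  shows "subtrees ({a, b}, {{a, b}}) = {({a}, {}), ({b}, {}), ({a, b}, {{a, b}})}"
proof (rule set_eqI, rule iffI)
  fix T assume T: "T \<in> subtrees ({a, b}, {{a, b}})"
  obtain V E where VE: "T = (V, E)" by (cases T)
  have sub: "V \<subseteq> {a, b}" "E \<subseteq> {{a, b}}" "\<forall>e\<in>E. e \<subseteq> V" "V \<noteq> {}"
    and connected: "connected_graph (V, E)"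
    using T VE unfolding subtrees_def is_subgraph_def is_tree_def by auto
  show "T \<in> {({a}, {}), ({b}, {}), ({a, b}, {{a, b}})}"
  proof (cases "E = {}")
    case True
    have "V \<noteq> {a, b}"
    proof
      assume "V = {a, b}"
      then have "(\<lambda>x y. {x, y} \<in> E)\<^sup>*\<^sup>* a b" using connected unfolding connected_graph_def by auto
      then show False using True assms by (auto elim: rtranclp.cases)
    qed
    then have "V = {a} \<or> V = {b}" using sub by blast
    then show ?thesis using VE True by auto
  next
    case False
    then have E: "E = {{a, b}}" using sub by blast
    then have "V = {a, b}" using sub by auto
    then show ?thesis using VE E by auto
  qed
next
  have "({x}, {}) \<in> subtrees ({a, b}, {{a, b}})" if "x \<in> {a, b}" for x
  proof -
    have "is_subgraph ({x}, {}) ({a, b}, {{a, b}})" using that unfolding is_subgraph_def by auto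
    moreover have "({x}, {}) \<in> subtrees ({x}, {})" by (simp add: subtrees_single_vertex)
    ultimately show ?thesis using subtrees_mono by blast
  qed
  then have "({a}, {}) \<in> subtrees ({a, b}, {{a, b}})" "({b}, {}) \<in> subtrees ({a, b}, {{a, b}})"
    by simp_all
  then show "T \<in> subtrees ({a, b}, {{a, b}})"
    if "T \<in> {({a}, {}), ({b}, {}), ({a, b}, {{a, b}})}" for T
    using that edge_mem_subtrees by auto
qed

lemma subtrees_edge_through_avoiding:
  assumes "a \<noteq> b"
  shows "subtrees_through ({a, b}, {{a, b}}) a = {({a}, {}), ({a, b}, {{a, b}})}"
    and "subtrees_avoiding ({a, b}, {{a, b}}) a = {({b}, {})}"
  using assms unfolding subtrees_through_def subtrees_avoiding_def subtrees_edge[OF assms] by auto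

lemma path_segment_mem_iff:
  assumes "inj_on p {..M}" "e \<le> M" "k \<le> M"
  shows "p k \<in> fst (path_segment p s e) \<longleftrightarrow> s \<le> k \<and> k \<le> e"
proof -
  have "p k \<in> p ` {s..e} \<longleftrightarrow> k \<in> {s..e}"
    using assms by (intro inj_on_image_mem_iff[of p "{..M}"]) auto
  then show ?thesis unfolding path_segment_def by simp
qed

lemma graph_union_path_segments_edge:
  "case_prod graph_union `
      ((\<lambda>s. path_segment p s m) ` {..m} \<times> {({p m}, {}), ({p m, p (Suc m)}, {{p m, p (Suc m)}})}) =
    (\<lambda>s. path_segment p s m) ` {..m} \<union> (\<lambda>s. path_segment p s (Suc m)) ` {..m}"
proof -
  have image_times_pair: "case_prod g ` (f ` I \<times> {a, b}) = (\<lambda>i. g (f i) a) ` I \<union> (\<lambda>i. g (f i) b) ` I"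
    for g :: "'a graph \<Rightarrow> 'a graph \<Rightarrow> 'a graph" and f :: "nat \<Rightarrow> 'a graph" and I a b
    by (auto simp: image_iff)
  have absorb: "graph_union (path_segment p s m) ({p m}, {}) = path_segment p s m" if "s \<le> m" for s
  proof -
    have "p m \<in> p ` {s..m}" using that by simp
    then show ?thesis unfolding graph_union_def path_segment_def by (simp add: insert_absorb)
  qed
  have extend: "graph_union (path_segment p s m) ({p m, p (Suc m)}, {{p m, p (Suc m)}}) =
      path_segment p s (Suc m)" if "s \<le> m" for s
  proof -
    have "{s..Suc m} = {s..m} \<union> {Suc m}" "{s..<Suc m} = {s..<m} \<union> {m}" using that by auto
    then show ?thesis using that unfolding graph_union_def path_segment_def by auto
  qed
  show ?thesis
    unfolding image_times_pair
    by (intro arg_cong2[where f = "(\<union>)"] image_cong) (simp_all add: absorb extend)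
qed

lemma path_segments_Suc:
  "{path_segment p s e | s e. s \<le> e \<and> e \<le> Suc m} =
    {path_segment p s e | s e. s \<le> e \<and> e < m} \<union> {path_segment p (Suc m) (Suc m)} \<union>
    ((\<lambda>s. path_segment p s m) ` {..m} \<union> (\<lambda>s. path_segment p s (Suc m)) ` {..m})"
proof (rule set_eqI, rule iffI)
  fix x assume "x \<in> {path_segment p s e | s e. s \<le> e \<and> e \<le> Suc m}"
  then obtain s e where x: "x = path_segment p s e" "s \<le> e" "e \<le> Suc m" by blast
  consider "e < m" | "e = m" | "e = Suc m" "s = Suc m" | "e = Suc m" "s \<le> m" using x by linarith
  then show "x \<in> {path_segment p s e | s e. s \<le> e \<and> e < m} \<union> {path_segment p (Suc m) (Suc m)} \<union>
    ((\<lambda>s. path_segment p s m) ` {..m} \<union> (\<lambda>s. path_segment p s (Suc m)) ` {..m})"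
    by cases (use x in auto)
qed fastforce

lemma subtrees_path_segment:
  assumes "inj_on p {..m}"
  shows "subtrees (path_segment p 0 m) = {path_segment p s e | s e. s \<le> e \<and> e \<le> m}"
  using assms
proof (induction m)
  case 0
  have "path_segment p 0 0 = ({p 0}, {})" unfolding path_segment_def by simp
  moreover have "{path_segment p s e | s e. s \<le> e \<and> e \<le> (0::nat)} = {path_segment p 0 0}" by auto
  ultimately show ?case using subtrees_single_vertex by simp
next
  case (Suc m)
  let ?E = "({p m, p (Suc m)}, {{p m, p (Suc m)}})"
  have inj: "inj_on p {..m}" using Suc.prems by (rule inj_on_subset) auto
  interpret one_point_union "fst (path_segment p 0 m)" "{p m, p (Suc m)}"
    "snd (path_segment p 0 m)" "{{p m, p (Suc m)}}" "p m"
    using one_point_union_path_segment[OF Suc.prems] .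
  have ne: "p m \<noteq> p (Suc m)"
    using Suc.prems by (metis atMost_iff inj_on_eq_iff le_SucI n_not_Suc_n order_refl)
  have mem: "p m \<in> fst (path_segment p s e) \<longleftrightarrow> s \<le> m \<and> m \<le> e" if "e \<le> m" for s e
    using path_segment_mem_iff[OF inj that] by simp
  have avoiding: "subtrees_avoiding (path_segment p 0 m) (p m) = {path_segment p s e | s e. s \<le> e \<and> e < m}"
    unfolding subtrees_avoiding_def Suc.IH[OF inj] using mem by fastforce
  have through: "subtrees_through (path_segment p 0 m) (p m) = (\<lambda>s. path_segment p s m) ` {..m}"
    unfolding subtrees_through_def Suc.IH[OF inj] using mem by fastforce
  have edge_avoiding: "subtrees_avoiding ?E (p m) = {path_segment p (Suc m) (Suc m)}"
    unfolding subtrees_edge_through_avoiding(2)[OF ne] path_segment_def by simp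
  have unions: "case_prod graph_union ` (subtrees_through (path_segment p 0 m) (p m) \<times> subtrees_through ?E (p m))
      = (\<lambda>s. path_segment p s m) ` {..m} \<union> (\<lambda>s. path_segment p s (Suc m)) ` {..m}"
    unfolding through subtrees_edge_through_avoiding(1)[OF ne] by (rule graph_union_path_segments_edge)
  show ?case
    unfolding path_segment_Suc subtrees_one_point_union prod.collapse
    unfolding avoiding edge_avoiding unions path_segments_Suc ..
qed

definition hex_edge :: "(nat \<Rightarrow> 'a) \<Rightarrow> nat \<Rightarrow> 'a set" where
  "hex_edge h k = {h k, h (Suc k mod 6)}"

definition hexagon :: "(nat \<Rightarrow> 'a) \<Rightarrow> 'a graph" where
  "hexagon h = (h ` {..<6}, hex_edge h ` {..<6})"

definition hex_arc :: "(nat \<Rightarrow> 'a) \<Rightarrow> nat \<Rightarrow> nat \<Rightarrow> 'a graph" where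
  "hex_arc h t l = path_segment (\<lambda>i. h ((t + i) mod 6)) 0 l"

definition arc_positions :: "nat \<Rightarrow> nat \<Rightarrow> nat set" where
  "arc_positions t l = (\<lambda>i. (t + i) mod 6) ` {0..l}"

lemma hex_arc_eq:
  "hex_arc h t l = (h ` arc_positions t l, hex_edge h ` (\<lambda>i. (t + i) mod 6) ` {0..<l})"
proof -
  have "hex_edge h ((t + i) mod 6) = {h ((t + i) mod 6), h ((t + Suc i) mod 6)}" for i
    unfolding hex_edge_def by (simp add: mod_Suc_eq)
  then show ?thesis
    unfolding hex_arc_def arc_positions_def path_segment_def by (simp add: image_image)
qed

lemma inj_on_hex_rotation:
  fixes h :: "nat \<Rightarrow> 'a"
  assumes "inj_on h {..<6}"
  shows "inj_on (\<lambda>i. h ((t + i) mod 6)) {..5}"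
proof (rule inj_onI)
  fix i j assume ij: "i \<in> {..5}" "j \<in> {..5}" and "h ((t + i) mod 6) = h ((t + j) mod 6)"
  then have "(t mod 6 + i) mod 6 = (t mod 6 + j) mod 6"
    using assms by (simp add: inj_on_eq_iff mod_add_left_eq)
  moreover have "\<forall>t\<in>set [0..<6]. \<forall>i\<in>set [0..<6]. \<forall>j\<in>set [0..<6].
      (t + i) mod 6 = (t + j) mod 6 \<longrightarrow> i = (j::nat)"
    by code_simp
  moreover have "t mod 6 \<in> set [0..<6]" "i \<in> set [0..<6]" "j \<in> set [0..<6]" using ij by auto
  ultimately show "i = j" by blast
qed

lemma inj_on_hex_edge:
  fixes h :: "nat \<Rightarrow> 'a"
  assumes "inj_on h {..<6}"
  shows "inj_on (hex_edge h) {..<6}"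
proof (rule inj_onI)
  fix k k' assume k: "k \<in> {..<6}" "k' \<in> {..<6}" and eq: "hex_edge h k = hex_edge h k'"
  have "Suc k mod 6 \<in> {..<6}" "Suc k' mod 6 \<in> {..<6}" by auto
  moreover have "h k = h k' \<and> h (Suc k mod 6) = h (Suc k' mod 6) \<or>
      h k = h (Suc k' mod 6) \<and> h (Suc k mod 6) = h k'"
    using eq unfolding hex_edge_def by (simp add: doubleton_eq_iff)
  ultimately have "k = k' \<or> (k = Suc k' mod 6 \<and> Suc k mod 6 = k')"
    using assms k by (auto dest: inj_onD)
  moreover have "k < 6" "k' < 6" using k by auto
  ultimately show "k = k'" by (auto simp: mod_Suc split: if_splits)
qed

lemma hexagon_cycle:
  assumes h: "inj_on h {..<6}" and T: "is_subgraph T (hexagon h)"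
    and edges: "\<forall>k<6. hex_edge h k \<in> snd T"
  shows "is_cycle T (map h [0..<6])"
proof -
  have "distinct (map h [0..<6])" using h by (simp add: distinct_map lessThan_atLeast0)
  moreover have "h k \<in> fst T" if "k < 6" for k
    using edges that T unfolding is_subgraph_def hex_edge_def by blast
  then have "set (map h [0..<6]) \<subseteq> fst T" by auto
  moreover have "{map h [0..<6] ! i, map h [0..<6] ! ((i + 1) mod length (map h [0..<6]))} \<in> snd T"
    if "i < 6" for i
    using edges that unfolding hex_edge_def by (simp add: nth_map)
  ultimately show ?thesis unfolding is_cycle_def by simp
qed

lemma hexagon_cut_positions:
  fixes j k :: nat
  assumes "k < 6" "j < 6"
  shows "\<exists>i\<le>5. (Suc k + i) mod 6 = j" and "j \<noteq> k \<Longrightarrow> \<exists>i<5. (Suc k + i) mod 6 = j"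
proof -
  have jk: "k \<in> set [0..<6]" "j \<in> set [0..<6]" using assms by auto
  have "\<forall>k\<in>set [0..<6]. \<forall>j\<in>set [0..<6]. \<exists>i\<in>set [0..<6]. (Suc k + i) mod 6 = (j::nat)"
    by code_simp
  then obtain i where "i \<in> set [0..<6]" "(Suc k + i) mod 6 = j" using jk by blast
  then show "\<exists>i\<le>5. (Suc k + i) mod 6 = j" by (intro exI[of _ i]) auto
  have "\<forall>k\<in>set [0..<6]. \<forall>j\<in>set [0..<6]. j \<noteq> k \<longrightarrow> (\<exists>i\<in>set [0..<5]. (Suc k + i) mod 6 = (j::nat))"
    by code_simp
  moreover assume "j \<noteq> k"
  ultimately obtain i where "i \<in> set [0..<5]" "(Suc k + i) mod 6 = j" using jk by blast
  then show "\<exists>i<5. (Suc k + i) mod 6 = j" by (intro exI[of _ i]) auto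
qed

lemma is_subgraph_hexagon_cut:
  assumes T: "is_subgraph T (hexagon h)" and k: "k < 6" "hex_edge h k \<notin> snd T"
  shows "is_subgraph T (path_segment (\<lambda>i. h ((Suc k + i) mod 6)) 0 5)"
  unfolding is_subgraph_def
proof (intro conjI)
  show "fst T \<subseteq> fst (path_segment (\<lambda>i. h ((Suc k + i) mod 6)) 0 5)"
  proof
    fix x assume "x \<in> fst T"
    then obtain j where j: "j < 6" "x = h j" using T unfolding is_subgraph_def hexagon_def by auto
    obtain i where "i \<le> 5" "(Suc k + i) mod 6 = j" using hexagon_cut_positions(1) j(1) k(1) by blast
    then show "x \<in> fst (path_segment (\<lambda>i. h ((Suc k + i) mod 6)) 0 5)"
      unfolding path_segment_def using j by auto
  qed
  show "snd T \<subseteq> snd (path_segment (\<lambda>i. h ((Suc k + i) mod 6)) 0 5)"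
  proof
    fix e assume e: "e \<in> snd T"
    then obtain j where j: "j < 6" "e = hex_edge h j" using T unfolding is_subgraph_def hexagon_def by auto
    then have "j \<noteq> k" using e k by blast
    then obtain i where i: "i < 5" "(Suc k + i) mod 6 = j" using hexagon_cut_positions(2) j(1) k(1) by blast
    have "Suc ((Suc k + i) mod 6) mod 6 = (Suc k + Suc i) mod 6" by (simp add: mod_Suc_eq)
    then have "e = {h ((Suc k + i) mod 6), h ((Suc k + Suc i) mod 6)}"
      unfolding j(2) hex_edge_def i(2)[symmetric] by simp
    then show "e \<in> snd (path_segment (\<lambda>i. h ((Suc k + i) mod 6)) 0 5)"
      unfolding path_segment_def using i by auto
  qed
qed (use T in \<open>simp add: is_subgraph_def\<close>)

lemma path_segment_edges_subset: "e \<in> snd (path_segment p s t) \<Longrightarrow> e \<subseteq> fst (path_segment p s t)"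
  unfolding path_segment_def by auto

lemma is_subgraph_hex_arc: "is_subgraph (hex_arc h t l) (hexagon h)"
  unfolding is_subgraph_def
proof (intro conjI)
  show "fst (hex_arc h t l) \<subseteq> fst (hexagon h)"
    unfolding hex_arc_def path_segment_def hexagon_def by auto
  show "snd (hex_arc h t l) \<subseteq> snd (hexagon h)"
    unfolding hex_arc_eq hexagon_def by auto
  show "\<forall>e\<in>snd (hex_arc h t l). e \<subseteq> fst (hex_arc h t l)"
    unfolding hex_arc_def using path_segment_edges_subset by blast
qed

lemma path_segment_hex_rotation:
  assumes "s \<le> e"
  shows "path_segment (\<lambda>i. h ((t + i) mod 6)) s e = hex_arc h ((t + s) mod 6) (e - s)"
proof -
  have "(\<lambda>i. h ((t + (s + i)) mod 6)) = (\<lambda>i. h (((t + s) mod 6 + i) mod 6))"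
    by (simp add: mod_add_left_eq add.assoc)
  then show ?thesis by (subst path_segment_shift[OF assms]) (simp add: hex_arc_def)
qed

lemma subtrees_hexagon:
  assumes h: "inj_on h {..<6}"
  shows "subtrees (hexagon h) = case_prod (hex_arc h) ` ({..<6} \<times> {..<6})"
proof (rule set_eqI, rule iffI)
  fix T assume T: "T \<in> subtrees (hexagon h)"
  then obtain k where k: "k < 6" "hex_edge h k \<notin> snd T"
    using hexagon_cycle[OF h] unfolding subtrees_def is_tree_def acyclic_graph_def by blast
  \<comment> \<open>A subtree misses some edge k, so it lives in the path obtained by cutting the hexagon open at k.\<close>
  then have "T \<in> subtrees (path_segment (\<lambda>i. h ((Suc k + i) mod 6)) 0 5)"
    using T is_subgraph_hexagon_cut unfolding subtrees_def by blast
  then obtain s e where "T = path_segment (\<lambda>i. h ((Suc k + i) mod 6)) s e" "s \<le> e" "e \<le> 5"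
    unfolding subtrees_path_segment[OF inj_on_hex_rotation[OF h]] by blast
  then have "T = hex_arc h ((Suc k + s) mod 6) (e - s)" "(Suc k + s) mod 6 < 6" "e - s < 6"
    using path_segment_hex_rotation[of s e h "Suc k"] by auto
  then show "T \<in> case_prod (hex_arc h) ` ({..<6} \<times> {..<6})" by force
next
  fix T assume "T \<in> case_prod (hex_arc h) ` ({..<6} \<times> {..<6})"
  then obtain t l where T: "T = hex_arc h t l" "l < 6" by auto
  then have "T \<in> subtrees (hex_arc h t 5)"
    unfolding hex_arc_def subtrees_path_segment[OF inj_on_hex_rotation[OF h]] by fastforce
  then show "T \<in> subtrees (hexagon h)" using subtrees_mono[OF is_subgraph_hex_arc] by blast
qed

lemma inj_on_hex_arc:
  assumes h: "inj_on h {..<6}"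
  shows "inj_on (case_prod (hex_arc h)) ({..<6} \<times> {..<6})"
proof -
  let ?positions = "\<lambda>(t, l). (arc_positions t l, (\<lambda>i. (t + i) mod 6) ` {0..<l})"
  have "{..<6::nat} \<times> {..<6} = set (List.product [0..<6] [0..<6])" by auto
  moreover have "distinct (map ?positions (List.product [0..<6] [0..<6]))"
    unfolding arc_positions_def by code_simp
  ultimately have inj: "inj_on ?positions ({..<6} \<times> {..<6})" by (simp add: distinct_map)
  have sub: "arc_positions t l \<subseteq> {..<6}" "(\<lambda>i. (t + i) mod 6) ` {0..<l} \<subseteq> {..<6}" for t l
    unfolding arc_positions_def by auto
  show ?thesis
  proof (rule inj_onI, clarsimp)
    fix t l t' l' assume tl: "t < 6" "l < 6" "t' < 6" "l' < 6" and eq: "hex_arc h t l = hex_arc h t' l'"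
    then have "arc_positions t l = arc_positions t' l'"
      "(\<lambda>i. (t + i) mod 6) ` {0..<l} = (\<lambda>i. (t' + i) mod 6) ` {0..<l'}"
      unfolding hex_arc_eq prod.inject
      using inj_on_image_eq_iff[OF h sub(1) sub(1)] inj_on_image_eq_iff[OF inj_on_hex_edge[OF h] sub(2) sub(2)]
      by auto
    then show "t = t' \<and> l = l'" using inj_onD[OF inj, of "(t, l)" "(t', l')"] tl by auto
  qed
qed

lemma card_subtrees_hexagon_vertices:
  assumes h: "inj_on h {..<6}" and "p < 6" "q < 6"
  shows "card {T \<in> subtrees (hexagon h). Q (h p \<in> fst T) (h q \<in> fst T)} =
    card {(t, l) \<in> {..<6} \<times> {..<6}. Q (p \<in> arc_positions t l) (q \<in> arc_positions t l)}"
proof -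
  have mem: "h r \<in> fst (hex_arc h t l) \<longleftrightarrow> r \<in> arc_positions t l" if "r < 6" for r t l
  proof -
    have "arc_positions t l \<subseteq> {..<6}" unfolding arc_positions_def by auto
    moreover have "r \<in> {..<6}" using that by simp
    ultimately show ?thesis unfolding hex_arc_eq using inj_on_image_mem_iff[OF h] by simp
  qed
  have "{T \<in> subtrees (hexagon h). Q (h p \<in> fst T) (h q \<in> fst T)} =
      case_prod (hex_arc h) ` {(t, l) \<in> {..<6} \<times> {..<6}. Q (p \<in> arc_positions t l) (q \<in> arc_positions t l)}"
    unfolding subtrees_hexagon[OF h] using mem assms(2,3) by auto
  moreover have "inj_on (case_prod (hex_arc h))
      {(t, l) \<in> {..<6} \<times> {..<6}. Q (p \<in> arc_positions t l) (q \<in> arc_positions t l)}"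
    using inj_on_hex_arc[OF h] by (rule inj_on_subset) auto
  ultimately show ?thesis by (simp add: card_image)
qed

lemma finite_hexagon: "finite (fst (hexagon h))" "finite (snd (hexagon h))"
  unfolding hexagon_def by auto

lemma card_subtrees_hexagon:
  assumes "inj_on h {..<6}"
  shows "card (subtrees (hexagon h)) = 36"
  using card_image[OF inj_on_hex_arc[OF assms]] unfolding subtrees_hexagon[OF assms] by simp

lemma card_subtrees_through_hexagon:
  assumes h: "inj_on h {..<6}" and p: "p < 6"
  shows "card (subtrees_through (hexagon h) (h p)) = 21"
proof -
  have "\<forall>p\<in>set [0..<6]. card {(t, l) \<in> {..<6} \<times> {..<6}. p \<in> arc_positions t l} = 21"
    unfolding arc_positions_def by code_simp
  then show ?thesis
    using card_subtrees_hexagon_vertices[OF h p p, of "\<lambda>a b. a"] p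
    unfolding subtrees_through_def by simp
qed

lemma card_subtrees_avoiding_hexagon:
  assumes "inj_on h {..<6}" "p < 6"
  shows "card (subtrees_avoiding (hexagon h) (h p)) = 15"
  using card_subtrees_split[OF finite_hexagon, of h "h p"] card_subtrees_hexagon[OF assms(1)]
    card_subtrees_through_hexagon[OF assms] by simp

\<comment> \<open>Avoiding vertex 0, a subtree is a subpath of the path 1, ..., 5; exactly c (6 - c) of these contain c.\<close>
lemma card_subtrees_avoiding_hexagon_containing:
  assumes h: "inj_on h {..<6}" and c: "c \<in> {1..5}"
  shows "card {T \<in> subtrees_avoiding (hexagon h) (h 0). h c \<in> fst T} = c * (6 - c)"
proof -
  have "\<forall>c\<in>set [1..<6]. card {(t, l) \<in> {..<6} \<times> {..<6}. 0 \<notin> arc_positions t l \<and> c \<in> arc_positions t l}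
      = c * (6 - c)"
    unfolding arc_positions_def by code_simp
  moreover have "c < 6" "c \<in> set [1..<6]" using c by auto
  ultimately show ?thesis
    using card_subtrees_hexagon_vertices[OF h _ \<open>c < 6\<close>, of 0 "\<lambda>a b. \<not> a \<and> b"]
    unfolding subtrees_avoiding_def by simp
qed

lemma card_subtrees_through_hexagon_containing:
  assumes h: "inj_on h {..<6}" and c: "c \<in> {1..5}"
  shows "card {T \<in> subtrees_through (hexagon h) (h 0). h c \<in> fst T} = 21 - c * (6 - c)"
proof -
  let ?A = "{T \<in> subtrees_through (hexagon h) (h 0). h c \<in> fst T}"
  let ?B = "{T \<in> subtrees_avoiding (hexagon h) (h 0). h c \<in> fst T}"
  have "subtrees_through (hexagon h) (h c) = ?A \<union> ?B" "?A \<inter> ?B = {}"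
    unfolding subtrees_through_def subtrees_avoiding_def by auto
  moreover have "finite ?A" "finite ?B"
    unfolding subtrees_through_def subtrees_avoiding_def
    by (simp_all add: finite_subtrees_filter finite_hexagon)
  ultimately have "card (subtrees_through (hexagon h) (h c)) = card ?A + card ?B"
    by (simp add: card_Un_disjoint)
  then show ?thesis
    using card_subtrees_through_hexagon[OF h, of c] card_subtrees_avoiding_hexagon_containing[OF h c] c
    by simp
qed

section \<open>Spiro chains\<close>

lemma inj_on_spiro_vtx:
  assumes "1 \<le> i"
  shows "inj_on (spiro_vtx cs i) {..<6}"
proof (rule inj_onI)
  fix x y assume "spiro_vtx cs i x = spiro_vtx cs i y"
  moreover have "i - 1 \<noteq> i" using assms by simp
  ultimately show "x = y" unfolding spiro_vtx_def
    by (cases "x = 0"; cases "y = 0"; cases "2 \<le> i") simp_all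
qed

lemma spiro_chain_eq_UN:
  "spiro_chain n cs =
    (\<Union>i\<in>{1..n}. fst (hexagon (spiro_vtx cs i)), \<Union>i\<in>{1..n}. snd (hexagon (spiro_vtx cs i)))"
proof -
  have UN: "{f i k | i k. 1 \<le> i \<and> i \<le> n \<and> (k::nat) < 6} = (\<Union>i\<in>{1..n}. f i ` {..<6})"
    for f :: "nat \<Rightarrow> nat \<Rightarrow> 'b"
    by fastforce
  show ?thesis
    unfolding spiro_chain_def hexagon_def hex_edge_def
    using UN[of "spiro_vtx cs"] UN[of "\<lambda>i k. {spiro_vtx cs i k, spiro_vtx cs i ((k + 1) mod 6)}"]
    by simp
qed

lemma spiro_chain_1: "spiro_chain 1 cs = hexagon (spiro_vtx cs 1)"
  unfolding spiro_chain_eq_UN by simp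

lemma spiro_chain_Suc:
  "spiro_chain (Suc n) cs = graph_union (spiro_chain n cs) (hexagon (spiro_vtx cs (Suc n)))"
proof -
  have "{1..Suc n} = {1..n} \<union> {Suc n}" by auto
  then show ?thesis unfolding spiro_chain_eq_UN graph_union_def by auto
qed

lemma finite_spiro_chain: "finite (fst (spiro_chain n cs))" "finite (snd (spiro_chain n cs))"
  unfolding spiro_chain_eq_UN hexagon_def by auto

lemma spiro_chain_vertex_index_le: "x \<in> fst (spiro_chain n cs) \<Longrightarrow> fst x \<le> n"
  unfolding spiro_chain_eq_UN hexagon_def spiro_vtx_def by (auto split: if_splits)

lemma spiro_vtx_Suc:
  assumes "1 \<le> n"
  shows "spiro_vtx cs (Suc n) k = (if k = 0 then (n, outpos cs n) else (Suc n, k))"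
  using assms unfolding spiro_vtx_def by auto

lemma fst_hexagon_spiro_vtx_Suc:
  assumes "1 \<le> n"
  shows "fst (hexagon (spiro_vtx cs (Suc n))) = insert (n, outpos cs n) (Pair (Suc n) ` {1..<6})"
proof -
  have "{..<6::nat} = insert 0 {1..<6}" by auto
  moreover have "spiro_vtx cs (Suc n) ` {1..<6} = Pair (Suc n) ` {1..<6}"
    using spiro_vtx_Suc[OF assms] by (intro image_cong) auto
  ultimately show ?thesis
    unfolding hexagon_def using spiro_vtx_Suc[OF assms, of cs 0] by simp
qed

lemma one_point_union_spiro_chain:
  assumes n: "1 \<le> n" and out: "outpos cs n \<in> {1..5}"
  shows "one_point_union (fst (spiro_chain n cs)) (fst (hexagon (spiro_vtx cs (Suc n))))
     (snd (spiro_chain n cs)) (snd (hexagon (spiro_vtx cs (Suc n)))) (n, outpos cs n)"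
proof
  have "spiro_vtx cs n (outpos cs n) = (n, outpos cs n)" "outpos cs n \<in> {..<6}"
    using out unfolding spiro_vtx_def by auto
  then have "(n, outpos cs n) \<in> fst (spiro_chain n cs)"
    unfolding spiro_chain_eq_UN hexagon_def using n by force
  then show "fst (spiro_chain n cs) \<inter> fst (hexagon (spiro_vtx cs (Suc n))) = {(n, outpos cs n)}"
    unfolding fst_hexagon_spiro_vtx_Suc[OF n] using spiro_chain_vertex_index_le by fastforce
next
  fix e assume "e \<in> snd (spiro_chain n cs) \<union> snd (hexagon (spiro_vtx cs (Suc n)))"
  then obtain i k where ik: "1 \<le> i" "k < 6" "e = hex_edge (spiro_vtx cs i) k"
    unfolding spiro_chain_eq_UN hexagon_def by auto
  have "k \<noteq> Suc k mod 6" "Suc k mod 6 < 6" using ik(2) by (auto simp: mod_Suc)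
  then have "spiro_vtx cs i k \<noteq> spiro_vtx cs i (Suc k mod 6)"
    using inj_onD[OF inj_on_spiro_vtx[OF ik(1)], of cs k "Suc k mod 6"] ik(2) by auto
  then show "\<exists>x y. x \<noteq> y \<and> e = {x, y}" using ik(3) unfolding hex_edge_def by blast
qed (auto simp: spiro_chain_eq_UN hexagon_def hex_edge_def)

definition STN_through_next :: "nat \<Rightarrow> nat list \<Rightarrow> nat" where
  "STN_through_next n cs = card (subtrees_through (spiro_chain n cs) (n, outpos cs n))"

lemma STN_spiro_chain_1: "STN (spiro_chain 1 cs) = 36"
  unfolding STN_eq_card_subtrees spiro_chain_1
  by (rule card_subtrees_hexagon) (simp add: inj_on_spiro_vtx)

lemma STN_through_next_1: "STN_through_next 1 cs = 21"
proof -
  have "spiro_vtx cs 1 3 = (1, outpos cs 1)" unfolding spiro_vtx_def outpos_def by simp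
  then show ?thesis
    using card_subtrees_through_hexagon[of "spiro_vtx cs 1" 3]
    unfolding STN_through_next_def spiro_chain_1 by (simp add: inj_on_spiro_vtx)
qed

lemma STN_spiro_chain_Suc:
  assumes n: "1 \<le> n" and out: "outpos cs n \<in> {1..5}"
  shows "STN (spiro_chain (Suc n) cs) = STN (spiro_chain n cs) + 20 * STN_through_next n cs + 15"
proof -
  interpret one_point_union "fst (spiro_chain n cs)" "fst (hexagon (spiro_vtx cs (Suc n)))"
     "snd (spiro_chain n cs)" "snd (hexagon (spiro_vtx cs (Suc n)))" "(n, outpos cs n)"
    using one_point_union_spiro_chain[OF n out] .
  have h: "inj_on (spiro_vtx cs (Suc n)) {..<6}" by (simp add: inj_on_spiro_vtx)
  have h0: "spiro_vtx cs (Suc n) 0 = (n, outpos cs n)" using spiro_vtx_Suc[OF n] by simp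
  have "STN (spiro_chain (Suc n) cs) = card (subtrees_avoiding (spiro_chain n cs) (n, outpos cs n)) + 15
      + card (subtrees_through (spiro_chain n cs) (n, outpos cs n)) * 21"
    unfolding STN_eq_card_subtrees spiro_chain_Suc graph_union_def
    using card_subtrees_one_point_union[OF finite_spiro_chain(1) finite_hexagon(1)
        finite_spiro_chain(2) finite_hexagon(2)]
      card_subtrees_avoiding_hexagon[OF h, of 0] card_subtrees_through_hexagon[OF h, of 0]
    unfolding h0 prod.collapse by simp
  moreover have "STN (spiro_chain n cs) = card (subtrees_through (spiro_chain n cs) (n, outpos cs n))
      + card (subtrees_avoiding (spiro_chain n cs) (n, outpos cs n))"
    unfolding STN_eq_card_subtrees by (rule card_subtrees_split[OF finite_spiro_chain])
  ultimately show ?thesis unfolding STN_through_next_def by simp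
qed

lemma STN_through_next_Suc:
  assumes n: "1 \<le> n" and out: "outpos cs n \<in> {1..5}"
    and c: "c = outpos cs (Suc n)" "c \<in> {1..5}"
  shows "STN_through_next (Suc n) cs = c * (6 - c) + (21 - c * (6 - c)) * STN_through_next n cs"
proof -
  interpret one_point_union "fst (spiro_chain n cs)" "fst (hexagon (spiro_vtx cs (Suc n)))"
     "snd (spiro_chain n cs)" "snd (hexagon (spiro_vtx cs (Suc n)))" "(n, outpos cs n)"
    using one_point_union_spiro_chain[OF n out] .
  have h: "inj_on (spiro_vtx cs (Suc n)) {..<6}" by (simp add: inj_on_spiro_vtx)
  have h0: "spiro_vtx cs (Suc n) 0 = (n, outpos cs n)" using spiro_vtx_Suc[OF n] by simp
  have hc: "spiro_vtx cs (Suc n) c = (Suc n, c)" using spiro_vtx_Suc[OF n] c by auto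
  have "(Suc n, c) \<in> fst (hexagon (spiro_vtx cs (Suc n)))" "(Suc n, c) \<noteq> (n, outpos cs n)"
    unfolding hexagon_def using hc[symmetric] c by auto
  then have "STN_through_next (Suc n) cs =
      card {T \<in> subtrees_avoiding (hexagon (spiro_vtx cs (Suc n))) (spiro_vtx cs (Suc n) 0).
        spiro_vtx cs (Suc n) c \<in> fst T}
      + card (subtrees_through (spiro_chain n cs) (n, outpos cs n)) *
        card {T \<in> subtrees_through (hexagon (spiro_vtx cs (Suc n))) (spiro_vtx cs (Suc n) 0).
          spiro_vtx cs (Suc n) c \<in> fst T}"
    unfolding STN_through_next_def subtrees_through_def spiro_chain_Suc graph_union_def c(1)[symmetric]
    using card_subtrees_one_point_union_containing[OF finite_spiro_chain(1) finite_hexagon(1)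
        finite_spiro_chain(2) finite_hexagon(2)]
    unfolding h0 hc prod.collapse subtrees_through_def by simp
  then show ?thesis
    using card_subtrees_avoiding_hexagon_containing[OF h c(2)]
      card_subtrees_through_hexagon_containing[OF h c(2)]
    unfolding STN_through_next_def by (simp add: mult.commute)
qed

section \<open>Summing over all attachment sequences\<close>

lemma outpos_append:
  assumes "1 \<le> j" "j \<le> length cs + 1"
  shows "outpos (cs @ ds) j = outpos cs j"
  using assms unfolding outpos_def by (cases "j = 1") (auto simp: nth_append)

lemma spiro_chain_append:
  assumes "n \<le> length cs + 2"
  shows "spiro_chain n (cs @ ds) = spiro_chain n cs"
proof -
  have "spiro_vtx (cs @ ds) i = spiro_vtx cs i" if "i \<le> n" for i
    using that assms outpos_append[of "i - 1" cs ds] unfolding spiro_vtx_def by fastforce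
  then show ?thesis unfolding spiro_chain_eq_UN by simp
qed

lemma STN_through_next_append:
  assumes "1 \<le> n" "n \<le> length cs + 1"
  shows "STN_through_next n (cs @ ds) = STN_through_next n cs"
  using assms spiro_chain_append[of n cs ds] outpos_append[of n cs ds]
  unfolding STN_through_next_def by simp


lemma card_spiro_choices: "card (spiro_choices n) = 3 ^ (n - 2)"
proof -
  have "spiro_choices n = {cs. set cs \<subseteq> {1, 2, 3} \<and> length cs = n - 2}"
    unfolding spiro_choices_def by auto
  then show ?thesis by (simp add: card_lists_length_eq numeral_3_eq_3)
qed

lemma spiro_choices_Suc:
  assumes "2 \<le> n"
  shows "spiro_choices (Suc n) = (\<lambda>(cs, c). cs @ [c]) ` (spiro_choices n \<times> {1, 2, 3})"
proof (rule set_eqI, rule iffI)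
  fix xs assume xs: "xs \<in> spiro_choices (Suc n)"
  then have "xs \<noteq> []" using assms unfolding spiro_choices_def by auto
  then have "xs = butlast xs @ [last xs]" by simp
  moreover have "(butlast xs, last xs) \<in> spiro_choices n \<times> {1, 2, 3}"
    using xs \<open>xs \<noteq> []\<close> unfolding spiro_choices_def
    by (auto dest: in_set_butlastD) (use last_in_set in blast)
  ultimately show "xs \<in> (\<lambda>(cs, c). cs @ [c]) ` (spiro_choices n \<times> {1, 2, 3})"
    by (metis (no_types, lifting) case_prod_conv image_eqI)
qed (use assms in \<open>auto simp: spiro_choices_def\<close>)

lemma sum_spiro_choices_Suc:
  assumes "2 \<le> n"
  shows "(\<Sum>cs\<in>spiro_choices (Suc n). g cs) = (\<Sum>cs\<in>spiro_choices n. \<Sum>c\<in>{1, 2, 3}. g (cs @ [c]))"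
proof -
  have "inj_on (\<lambda>(cs, c). cs @ [c]) (spiro_choices n \<times> {1, 2, 3})" by (rule inj_onI) auto
  then have "(\<Sum>cs\<in>spiro_choices (Suc n). g cs) = (\<Sum>(cs, c)\<in>spiro_choices n \<times> {1, 2, 3}. g (cs @ [c]))"
    unfolding spiro_choices_Suc[OF assms] by (simp add: sum.reindex case_prod_unfold)
  also have "\<dots> = (\<Sum>cs\<in>spiro_choices n. \<Sum>c\<in>{1, 2, 3}. g (cs @ [c]))"
    by (rule sum.cartesian_product[symmetric])
  finally show ?thesis .
qed

definition total_STN :: "nat \<Rightarrow> real" where
  "total_STN n = (\<Sum>cs\<in>spiro_choices n. real (STN (spiro_chain n cs)))"

definition total_through_next :: "nat \<Rightarrow> real" where
  "total_through_next n = (\<Sum>cs\<in>spiro_choices (Suc n). real (STN_through_next n cs))"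

lemma outpos_spiro_choices:
  assumes "cs \<in> spiro_choices n" "1 \<le> j" "j < n"
  shows "outpos cs j \<in> {1..5}"
proof -
  have "outpos cs j \<in> {1, 2, 3}"
    using assms unfolding spiro_choices_def outpos_def by (auto simp: subset_iff)
  then show ?thesis by auto
qed

lemma total_STN_Suc:
  assumes n: "2 \<le> n"
  shows "total_STN (Suc n) = 3 * total_STN n + 20 * total_through_next n + 15 * 3 ^ (n - 1)"
proof -
  have "STN (spiro_chain (Suc n) cs) = STN (spiro_chain n cs) + 20 * STN_through_next n cs + 15"
    if "cs \<in> spiro_choices (Suc n)" for cs
    using STN_spiro_chain_Suc outpos_spiro_choices[OF that, of n] n by simp
  then have "total_STN (Suc n) = (\<Sum>cs\<in>spiro_choices (Suc n).
      real (STN (spiro_chain n cs)) + 20 * real (STN_through_next n cs) + 15)"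
    unfolding total_STN_def by (intro sum.cong) auto
  also have "\<dots> = (\<Sum>cs\<in>spiro_choices (Suc n). real (STN (spiro_chain n cs)))
      + 20 * total_through_next n + 15 * 3 ^ (n - 1)"
    using card_spiro_choices[of "Suc n"] n
    by (simp add: sum.distrib sum_distrib_left total_through_next_def Suc_diff_Suc numeral_2_eq_2)
  also have "(\<Sum>cs\<in>spiro_choices (Suc n). real (STN (spiro_chain n cs))) = 3 * total_STN n"
    unfolding total_STN_def sum_spiro_choices_Suc[OF n]
    by (simp add: sum_distrib_left spiro_chain_append spiro_choices_def)
  finally show ?thesis .
qed

lemma total_through_next_Suc:
  assumes n: "2 \<le> n"
  shows "total_through_next (Suc n) = 41 * total_through_next n + 22 * 3 ^ (n - 1)"
proof -
  have step: "STN_through_next (Suc n) (cs @ [c]) = c * (6 - c) + (21 - c * (6 - c)) * STN_through_next n cs"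
    if cs: "cs \<in> spiro_choices (Suc n)" and c: "c \<in> {1, 2, 3}" for cs c
  proof -
    have "length cs = n - 1" using cs unfolding spiro_choices_def by simp
    then have "outpos (cs @ [c]) n = outpos cs n" "outpos (cs @ [c]) (Suc n) = c"
      "STN_through_next n (cs @ [c]) = STN_through_next n cs"
      using n outpos_append[of n cs "[c]"] STN_through_next_append[of n cs "[c]"]
      by (auto simp: outpos_def nth_append)
    moreover have "outpos cs n \<in> {1..5}" using outpos_spiro_choices[OF cs, of n] n by simp
    moreover have "c \<in> {1..5}" using c by auto
    ultimately show ?thesis
      using STN_through_next_Suc[of n "cs @ [c]" c] n by simp
  qed
  have "(\<Sum>c\<in>{1, 2, 3}. real (STN_through_next (Suc n) (cs @ [c]))) = 22 + 41 * real (STN_through_next n cs)"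
    if "cs \<in> spiro_choices (Suc n)" for cs
    using step[OF that, of 1] step[OF that, of 2] step[OF that, of 3] by simp
  then have "total_through_next (Suc n) = (\<Sum>cs\<in>spiro_choices (Suc n). 22 + 41 * real (STN_through_next n cs))"
    using n unfolding total_through_next_def sum_spiro_choices_Suc[OF le_SucI[OF n]]
    by (intro sum.cong) auto
  also have "\<dots> = 41 * total_through_next n + 22 * 3 ^ (n - 1)"
    using card_spiro_choices[of "Suc n"] n
    by (simp add: sum.distrib sum_distrib_left total_through_next_def Suc_diff_Suc numeral_2_eq_2)
  finally show ?thesis .
qed

lemma total_STN_2: "total_STN 2 = 471"
proof -
  have "spiro_choices 2 = {[]}" unfolding spiro_choices_def by auto
  moreover have "STN (spiro_chain (Suc 1) []) = 471"
    using STN_spiro_chain_Suc[of 1 "[]"] STN_spiro_chain_1 STN_through_next_1 by (simp add: outpos_def)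
  ultimately show ?thesis unfolding total_STN_def by (simp add: numeral_2_eq_2)
qed

lemma total_through_next_2: "total_through_next 2 = 883"
proof -
  have "spiro_choices (Suc 2) = {[1], [2], [3]}"
    unfolding spiro_choices_def by (auto simp: length_Suc_conv numeral_3_eq_3)
  then have "total_through_next 2 =
      real (STN_through_next 2 [1]) + real (STN_through_next 2 [2]) + real (STN_through_next 2 [3])"
    unfolding total_through_next_def by simp
  moreover have "STN_through_next 2 [c] = c * (6 - c) + (21 - c * (6 - c)) * 21" if "c \<in> {1..5}" for c
    using STN_through_next_Suc[of 1 "[c]" c] STN_through_next_1 that by (simp add: outpos_def numeral_2_eq_2)
  ultimately show ?thesis by simp
qed

lemma total_through_next_closed_form:
  "total_through_next (k + 2) = 3 ^ k * (16810 / 19 * (41 / 3) ^ k - 33 / 19)"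
proof (induction k)
  case 0
  then show ?case using total_through_next_2 by (simp add: numeral_2_eq_2)
next
  case (Suc k)
  then show ?case
    using total_through_next_Suc[of "k + 2"] by (simp add: field_simps)
qed

lemma total_STN_closed_form:
  "total_STN (k + 2) = 3 ^ k * (900 / 361 * (41 / 3) ^ (k + 2) + 130 / 38 * real (k + 2) - 539 / 361)"
proof (induction k)
  case 0
  then show ?case using total_STN_2 by (simp add: numeral_2_eq_2)
next
  case (Suc k)
  then show ?case
    using total_STN_Suc[of "k + 2"] total_through_next_closed_form[of k] by (simp add: field_simps)
qed

theorem theorem8:
  fixes n :: nat
  assumes "n \<ge> 1"
  shows "STN_avr n = 900 / 361 * (41 / 3) ^ n + 130 / 38 * real n - 539 / 361"
proof (cases "n = 1")
  case True
  have "spiro_choices 1 = {[]}" unfolding spiro_choices_def by auto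
  then show ?thesis using True STN_spiro_chain_1[of "[]"] unfolding STN_avr_def by simp
next
  case False
  define k where "k = n - 2"
  have k: "n = k + 2" using assms False unfolding k_def by simp
  have "STN_avr n = total_STN (k + 2) / 3 ^ k"
    unfolding STN_avr_def total_STN_def k card_spiro_choices by simp
  then show ?thesis using total_STN_closed_form[of k] k by simp
qed

end
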